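(* Let $\mu>0$ be an integer upper bound and $d>1$ a discount factor. Let $v\in\mathbb{Q}$ be a threshold value with representation $v=v[0]v[1]\dots v[m](v[m+1]v[m+2]\dots v[n])^{\omega}$. Let $W$ be a non-empty finite weight sequence over $\{-\mu,\dots,\mu\}$. Then: (1) $\mathrm{gap}(W-v[\dots|W|])>\frac1d\cdot\mathrm{DS}(v[|W|\dots],d)+\frac{\mu}{d-1}$ if and only if for all infinite extensions $Y\in\{-\mu,\dots,\mu\}^{\omega}$, $\mathrm{DS}(W\cdot Y,d)>v$; (2) $\mathrm{gap}(W-v[\dots|W|])\le\frac1d\cdot\mathrm{DS}(v[|W|\dots],d)-\frac{\mu}{d-1}$ if and only if for all infinite extensions $Y\in\{-\mu,\dots,\mu\}^{\omega}$, $\mathrm{DS}(W\cdot Y,d)\le v$.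
   Context: For a finite or infinite sequence $A=a_0a_1\dots$, $\mathrm{DS}(A,d)=\sum_i a_i/d^i$. The threshold $v$ is represented by an ultimately periodic sequence of integers $v[0]v[1]\dots v[m](v[m+1]\dots v[n])^{\omega}$ whose discounted sum with factor $d$ equals $v$; below this infinite sequence is also denoted $v$. For $i\ge0$, $v[\dots i]$ denotes the prefix of length $i$ of this infinite sequence and $v[i\dots]$ the remaining infinite suffix (starting at index $i$). For finite sequences of equal length, $W-U$ denotes their pointwise difference. The recoverable gap of a finite sequence $U$ is $\mathrm{gap}(\varepsilon)=0$ for the empty sequence and $\mathrm{gap}(U)=d^{|U|-1}\cdot\mathrm{DS}(U,d)$ otherwise. *)

theory Defs
  imports Complex_Main
begin

definition DS_fin :: "int list \<Rightarrow> real \<Rightarrow> real" where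
  "DS_fin A d = (\<Sum>i<length A. real_of_int (A ! i) / d ^ i)"

definition DS_inf :: "(nat \<Rightarrow> int) \<Rightarrow> real \<Rightarrow> real" where
  "DS_inf a d = (\<Sum>i. real_of_int (a i) / d ^ i)"

definition gap :: "int list \<Rightarrow> real \<Rightarrow> real" where
  "gap U d = (if U = [] then 0 else d ^ (length U - 1) * DS_fin U d)"

text \<open>The ultimately periodic sequence pre (per)^omega, where
  pre = v[0]..v[m] and per = v[m+1]..v[n].\<close>
definition ult_per :: "int list \<Rightarrow> int list \<Rightarrow> nat \<Rightarrow> int" where
  "ult_per pre per i =
     (if i < length pre then pre ! i else per ! ((i - length pre) mod length per))"

definition seq_prefix :: "(nat \<Rightarrow> int) \<Rightarrow> nat \<Rightarrow> int list" where
  "seq_prefix v k = map v [0..<k]"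

definition seq_suffix :: "(nat \<Rightarrow> int) \<Rightarrow> nat \<Rightarrow> nat \<Rightarrow> int" where
  "seq_suffix v k = (\<lambda>i. v (i + k))"

definition list_diff :: "int list \<Rightarrow> int list \<Rightarrow> int list" where
  "list_diff W U = map2 (\<lambda>x y. x - y) W U"

definition conc :: "int list \<Rightarrow> (nat \<Rightarrow> int) \<Rightarrow> nat \<Rightarrow> int" where
  "conc W Y = (\<lambda>i. if i < length W then W ! i else Y (i - length W))"

end

theory Submission
  imports Defs
begin

text \<open>Splitting the discounted sum of W Y after the prefix W, and that of v after its
  prefix of length |W|, gives
  d^|W| (DS(W Y) - v) = d gap(W - v[..|W|]) + DS(Y) - DS(v[|W|..]).
  As Y ranges over the sequences bounded by \<mu>, DS(Y) ranges over an interval whose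
  endpoints \<plusminus>\<mu> d/(d-1) are attained by the constant sequences, so both universal
  statements reduce to comparing the gap with the corresponding endpoint.\<close>

lemma summable_DS:
  fixes a :: "nat \<Rightarrow> int" and d :: real
  assumes "d > 1" "\<forall>i. \<bar>a i\<bar> \<le> B"
  shows "summable (\<lambda>i. real_of_int (a i) / d ^ i)"
proof (rule summable_comparison_test)
  show "summable (\<lambda>i. B * (1 / d) ^ i)"
    using assms(1) by (intro summable_mult summable_geometric) auto
  show "\<exists>N. \<forall>i\<ge>N. norm (real_of_int (a i) / d ^ i) \<le> B * (1 / d) ^ i"
  proof (intro exI allI impI)
    fix i :: nat
    have "\<bar>real_of_int (a i)\<bar> \<le> B"
      using assms(2) by (metis of_int_abs of_int_le_iff)
    then show "norm (real_of_int (a i) / d ^ i) \<le> B * (1 / d) ^ i"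
      using assms(1) by (simp add: abs_divide power_one_over divide_right_mono)
  qed
qed

lemma summable_DS_ult_per:
  fixes d :: real
  assumes "d > 1" "per \<noteq> []"
  shows "summable (\<lambda>i. real_of_int (ult_per pre per i) / d ^ i)"
proof (rule summable_DS[OF assms(1)], intro allI)
  fix i
  have "ult_per pre per i \<in> set (pre @ per)"
    unfolding ult_per_def using assms(2) by auto
  then show "\<bar>ult_per pre per i\<bar> \<le> Max (abs ` set (pre @ per))"
    by simp
qed

lemma summable_DS_conc:
  fixes d :: real
  assumes "summable (\<lambda>i. real_of_int (Y i) / d ^ i)"
  shows "summable (\<lambda>i. real_of_int (conc W Y i) / d ^ i)"
proof -
  have "(\<lambda>i. real_of_int (conc W Y (i + length W)) / d ^ (i + length W))
        = (\<lambda>i. real_of_int (Y i) / d ^ i / d ^ length W)"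
    by (simp add: conc_def power_add)
  then show ?thesis
    using summable_divide[OF assms]
      summable_iff_shift[of "\<lambda>i. real_of_int (conc W Y i) / d ^ i" "length W"]
    by simp
qed

lemma DS_inf_split:
  fixes d :: real
  assumes "d \<noteq> 0" "summable (\<lambda>i. real_of_int (a i) / d ^ i)"
  shows "DS_inf a d = DS_fin (seq_prefix a k) d + DS_inf (seq_suffix a k) d / d ^ k"
proof -
  let ?f = "\<lambda>i. real_of_int (a i) / d ^ i"
  have tail: "(\<lambda>i. ?f (i + k)) = (\<lambda>i. real_of_int (a (i + k)) / d ^ i / d ^ k)"
    by (simp add: power_add)
  have "summable (\<lambda>i. real_of_int (a (i + k)) / d ^ i / d ^ k)"
    using assms(2) summable_iff_shift[of ?f k] unfolding tail by blast
  then have "summable (\<lambda>i. real_of_int (a (i + k)) / d ^ i)"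
    using assms(1) summable_divide_iff by (metis power_not_zero)
  then have "(\<Sum>i. ?f (i + k)) = DS_inf (seq_suffix a k) d / d ^ k"
    unfolding tail DS_inf_def seq_suffix_def by (rule suminf_divide)
  moreover have "DS_inf a d = (\<Sum>i. ?f (i + k)) + (\<Sum>i<k. ?f i)"
    unfolding DS_inf_def using assms(2) by (rule suminf_split_initial_segment)
  ultimately show ?thesis
    by (simp add: DS_fin_def seq_prefix_def)
qed

lemma seq_prefix_conc [simp]: "seq_prefix (conc W Y) (length W) = W"
  by (rule nth_equalityI) (simp_all add: seq_prefix_def conc_def)

lemma seq_suffix_conc [simp]: "seq_suffix (conc W Y) (length W) = Y"
  by (simp add: seq_suffix_def conc_def)

lemma DS_inf_conc:
  fixes d :: real
  assumes "d \<noteq> 0" "summable (\<lambda>i. real_of_int (Y i) / d ^ i)"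
  shows "DS_inf (conc W Y) d = DS_fin W d + DS_inf Y d / d ^ length W"
  using DS_inf_split[OF assms(1) summable_DS_conc[OF assms(2)], of W "length W"] by simp

lemma DS_fin_list_diff:
  assumes "length U = length W"
  shows "DS_fin (list_diff W U) d = DS_fin W d - DS_fin U d"
  using assms by (simp add: DS_fin_def list_diff_def diff_divide_distrib sum_subtractf)

lemma gap_list_diff:
  assumes "W \<noteq> []" "length U = length W"
  shows "d * gap (list_diff W U) d = d ^ length W * (DS_fin W d - DS_fin U d)"
proof -
  have "list_diff W U \<noteq> []" "length (list_diff W U) = length W"
    using assms by (auto simp: list_diff_def)
  moreover have "d * d ^ (length W - 1) = d ^ length W"
    using assms(1) by (metis Suc_diff_1 length_greater_0_conv power_Suc)
  ultimately show ?thesis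
    using assms(2) by (simp add: gap_def DS_fin_list_diff)
qed

lemma DS_inf_conc_minus_DS_inf:
  fixes d :: real
  assumes "d \<noteq> 0" "W \<noteq> []"
    and "summable (\<lambda>i. real_of_int (u i) / d ^ i)"
    and "summable (\<lambda>i. real_of_int (Y i) / d ^ i)"
  shows "d ^ length W * (DS_inf (conc W Y) d - DS_inf u d)
         = d * gap (list_diff W (seq_prefix u (length W))) d
           + DS_inf Y d - DS_inf (seq_suffix u (length W)) d"
  using assms
  by (simp add: DS_inf_conc DS_inf_split[OF assms(1,3), of "length W"] gap_list_diff
      seq_prefix_def field_simps)

lemma DS_inf_conc_gt_iff:
  fixes d :: real
  assumes "d > 0" "W \<noteq> []"
    and "summable (\<lambda>i. real_of_int (u i) / d ^ i)"
    and "summable (\<lambda>i. real_of_int (Y i) / d ^ i)"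
  shows "DS_inf u d < DS_inf (conc W Y) d
         \<longleftrightarrow> DS_inf (seq_suffix u (length W)) d
             - d * gap (list_diff W (seq_prefix u (length W))) d < DS_inf Y d"
proof -
  have "DS_inf u d < DS_inf (conc W Y) d
        \<longleftrightarrow> 0 < d ^ length W * (DS_inf (conc W Y) d - DS_inf u d)"
    using assms(1) by (simp add: zero_less_mult_iff)
  moreover have "d \<noteq> 0"
    using assms(1) by simp
  ultimately show ?thesis
    using DS_inf_conc_minus_DS_inf[OF _ assms(2-4)] by linarith
qed

lemma DS_inf_const:
  fixes d :: real
  assumes "d > 1"
  shows "DS_inf (\<lambda>i. c) d = c * d / (d - 1)"
proof -
  have "(\<lambda>i. c * (1 / d) ^ i) sums (c * (1 / (1 - 1 / d)))"
    using assms by (intro sums_mult geometric_sums) auto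
  moreover have "c * (1 / (1 - 1 / d)) = c * d / (d - 1)"
    using assms by (simp add: field_simps)
  ultimately show ?thesis
    unfolding DS_inf_def by (simp add: power_one_over sums_iff)
qed

lemma DS_inf_mono:
  fixes d :: real
  assumes "d > 0" "\<forall>i. a i \<le> b i"
    and "summable (\<lambda>i. real_of_int (a i) / d ^ i)" "summable (\<lambda>i. real_of_int (b i) / d ^ i)"
  shows "DS_inf a d \<le> DS_inf b d"
  unfolding DS_inf_def using assms by (intro suminf_le divide_right_mono) auto

lemma abs_DS_inf_le:
  fixes d :: real
  assumes "d > 1" "\<forall>i. \<bar>Y i\<bar> \<le> (\<mu> :: int)"
  shows "\<bar>DS_inf Y d\<bar> \<le> \<mu> * d / (d - 1)"
proof -
  have const: "summable (\<lambda>i. real_of_int c / d ^ i)" for c :: int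
    using summable_DS[OF assms(1), of "\<lambda>_. c" "\<bar>c\<bar>"] by simp
  have "\<forall>i. Y i \<le> \<mu>" "\<forall>i. - \<mu> \<le> Y i"
    using assms(2) by (metis abs_le_D1, metis abs_le_D2 minus_le_iff)
  then have "DS_inf Y d \<le> DS_inf (\<lambda>i. \<mu>) d" "DS_inf (\<lambda>i. - \<mu>) d \<le> DS_inf Y d"
    using assms(1) summable_DS[OF assms] const by (auto intro!: DS_inf_mono)
  then show ?thesis
    using DS_inf_const[OF assms(1), of \<mu>] DS_inf_const[OF assms(1), of "- \<mu>"] by simp
qed

lemma all_DS_inf_gt_iff:
  fixes d :: real
  assumes "d > 1" "(\<mu> :: int) \<ge> 0"
  shows "(\<forall>Y. (\<forall>i. \<bar>Y i\<bar> \<le> \<mu>) \<longrightarrow> c < DS_inf Y d) \<longleftrightarrow> c < - (\<mu> * d / (d - 1))"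
proof
  assume "\<forall>Y. (\<forall>i. \<bar>Y i\<bar> \<le> \<mu>) \<longrightarrow> c < DS_inf Y d"
  then have "c < DS_inf (\<lambda>i. - \<mu>) d"
    using assms(2) by simp
  then show "c < - (\<mu> * d / (d - 1))"
    using DS_inf_const[OF assms(1), of "- \<mu>"] by simp
next
  assume "c < - (\<mu> * d / (d - 1))"
  moreover have "- (\<mu> * d / (d - 1)) \<le> DS_inf Y d" if "\<forall>i. \<bar>Y i\<bar> \<le> \<mu>" for Y
    using abs_DS_inf_le[OF assms(1) that] by linarith
  ultimately show "\<forall>Y. (\<forall>i. \<bar>Y i\<bar> \<le> \<mu>) \<longrightarrow> c < DS_inf Y d"
    by (meson less_le_trans)
qed

lemma all_DS_inf_le_iff:
  fixes d :: real
  assumes "d > 1" "(\<mu> :: int) \<ge> 0"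
  shows "(\<forall>Y. (\<forall>i. \<bar>Y i\<bar> \<le> \<mu>) \<longrightarrow> DS_inf Y d \<le> c) \<longleftrightarrow> \<mu> * d / (d - 1) \<le> c"
proof
  assume "\<forall>Y. (\<forall>i. \<bar>Y i\<bar> \<le> \<mu>) \<longrightarrow> DS_inf Y d \<le> c"
  then have "DS_inf (\<lambda>i. \<mu>) d \<le> c"
    using assms(2) by simp
  then show "\<mu> * d / (d - 1) \<le> c"
    using DS_inf_const[OF assms(1), of \<mu>] by simp
next
  assume "\<mu> * d / (d - 1) \<le> c"
  moreover have "DS_inf Y d \<le> \<mu> * d / (d - 1)" if "\<forall>i. \<bar>Y i\<bar> \<le> \<mu>" for Y
    using abs_DS_inf_le[OF assms(1) that] by linarith
  ultimately show "\<forall>Y. (\<forall>i. \<bar>Y i\<bar> \<le> \<mu>) \<longrightarrow> DS_inf Y d \<le> c"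
    by (meson order_trans)
qed

theorem lemma3:
  fixes \<mu> :: int and d :: real and v :: real
    and pre per :: "int list" and W :: "int list"
  assumes mu_pos: "\<mu> > 0"
    and d_gt: "d > 1"
    and v_rat: "v \<in> \<rat>"
    and pre_ne: "pre \<noteq> []" and per_ne: "per \<noteq> []"
    and v_rep: "DS_inf (ult_per pre per) d = v"
    and W_ne: "W \<noteq> []"
    and W_bd: "\<forall>x\<in>set W. \<bar>x\<bar> \<le> \<mu>"
  shows "(gap (list_diff W (seq_prefix (ult_per pre per) (length W))) d
            > 1 / d * DS_inf (seq_suffix (ult_per pre per) (length W)) d + \<mu> / (d - 1)
          \<longleftrightarrow> (\<forall>Y. (\<forall>i. \<bar>Y i\<bar> \<le> \<mu>) \<longrightarrow> DS_inf (conc W Y) d > v))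
       \<and> (gap (list_diff W (seq_prefix (ult_per pre per) (length W))) d
            \<le> 1 / d * DS_inf (seq_suffix (ult_per pre per) (length W)) d - \<mu> / (d - 1)
          \<longleftrightarrow> (\<forall>Y. (\<forall>i. \<bar>Y i\<bar> \<le> \<mu>) \<longrightarrow> DS_inf (conc W Y) d \<le> v))"
proof -
  define G where "G = gap (list_diff W (seq_prefix (ult_per pre per) (length W))) d"
  define T where "T = DS_inf (seq_suffix (ult_per pre per) (length W)) d"
  have gt: "DS_inf (conc W Y) d > v \<longleftrightarrow> T - d * G < DS_inf Y d"
    if "\<forall>i. \<bar>Y i\<bar> \<le> \<mu>" for Y
    using DS_inf_conc_gt_iff[OF _ W_ne summable_DS_ult_per[OF d_gt per_ne, where pre = pre]
        summable_DS[OF d_gt that]] d_gt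
    unfolding G_def T_def v_rep[symmetric] by simp
  have le: "DS_inf (conc W Y) d \<le> v \<longleftrightarrow> DS_inf Y d \<le> T - d * G"
    if "\<forall>i. \<bar>Y i\<bar> \<le> \<mu>" for Y
    using gt[OF that] by linarith
  have "(\<forall>Y. (\<forall>i. \<bar>Y i\<bar> \<le> \<mu>) \<longrightarrow> DS_inf (conc W Y) d > v)
        \<longleftrightarrow> T - d * G < - (\<mu> * d / (d - 1))"
    using gt all_DS_inf_gt_iff[OF d_gt, of \<mu>] mu_pos by simp
  also have "\<dots> \<longleftrightarrow> G > 1 / d * T + \<mu> / (d - 1)"
    using d_gt by (simp add: field_simps)
  finally have all_gt_iff: "G > 1 / d * T + \<mu> / (d - 1)
    \<longleftrightarrow> (\<forall>Y. (\<forall>i. \<bar>Y i\<bar> \<le> \<mu>) \<longrightarrow> DS_inf (conc W Y) d > v)" ..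
  have "(\<forall>Y. (\<forall>i. \<bar>Y i\<bar> \<le> \<mu>) \<longrightarrow> DS_inf (conc W Y) d \<le> v)
        \<longleftrightarrow> \<mu> * d / (d - 1) \<le> T - d * G"
    using le all_DS_inf_le_iff[OF d_gt, of \<mu>] mu_pos by simp
  also have "\<dots> \<longleftrightarrow> G \<le> 1 / d * T - \<mu> / (d - 1)"
    using d_gt by (simp add: field_simps)
  finally show ?thesis
    using all_gt_iff unfolding G_def T_def by blast
qed

end
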